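(* Let $G$ be a finite simple graph with $n=|V(G)|$, and let $v_1,\dots,v_r$ be a $\beta$-sequence in $G$ which is not contained in any $(r+1)$-clique of $G$. Then $r\ge W(G)$.
   Context: Graphs are finite, undirected, without loops or multiple edges; $N(v)$ is the set of vertices adjacent to $v$, $d(v)=|N(v)|$, and $N(v_1,\dots,v_k)=\bigcap_{j=1}^k N(v_j)$. A $p$-clique is a set of $p$ pairwise adjacent vertices. Define $W(G)=\sum_{v\in V(G)}\frac{1}{n-d(v)}$. A sequence $v_1,\dots,v_r$ of vertices is a $\beta$-sequence in $G$ if (i) $d(v_1)=\max\{d(v)\mid v\in V(G)\}$, and (ii) for $2\le i\le r$, $v_i\in N(v_1,\dots,v_{i-1})$ and $d(v_i)=\max\{d(v)\mid v\in N(v_1,\dots,v_{i-1})\}$ (degrees taken in $G$). *)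

theory Defs
  imports Complex_Main
begin

definition simple_graph :: "'a set \<Rightarrow> ('a \<Rightarrow> 'a \<Rightarrow> bool) \<Rightarrow> bool" where
  "simple_graph V E \<longleftrightarrow> finite V \<and> (\<forall>u v. E u v \<longrightarrow> E v u)
     \<and> (\<forall>v. \<not> E v v) \<and> (\<forall>u v. E u v \<longrightarrow> u \<in> V \<and> v \<in> V)"

definition nbhd :: "'a set \<Rightarrow> ('a \<Rightarrow> 'a \<Rightarrow> bool) \<Rightarrow> 'a \<Rightarrow> 'a set" where
  "nbhd V E v = {u \<in> V. E v u}"

definition deg :: "'a set \<Rightarrow> ('a \<Rightarrow> 'a \<Rightarrow> bool) \<Rightarrow> 'a \<Rightarrow> nat" where
  "deg V E v = card (nbhd V E v)"

definition common_nbhd :: "'a set \<Rightarrow> ('a \<Rightarrow> 'a \<Rightarrow> bool) \<Rightarrow> 'a list \<Rightarrow> 'a set" where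
  "common_nbhd V E vs = {u \<in> V. \<forall>w \<in> set vs. E w u}"

definition clique :: "'a set \<Rightarrow> ('a \<Rightarrow> 'a \<Rightarrow> bool) \<Rightarrow> 'a set \<Rightarrow> bool" where
  "clique V E K \<longleftrightarrow> K \<subseteq> V \<and> (\<forall>u\<in>K. \<forall>v\<in>K. u \<noteq> v \<longrightarrow> E u v)"

definition W :: "'a set \<Rightarrow> ('a \<Rightarrow> 'a \<Rightarrow> bool) \<Rightarrow> real" where
  "W V E = (\<Sum>v\<in>V. 1 / (real (card V) - real (deg V E v)))"

text \<open>beta-sequence v_1,...,v_r (list vs, r = length vs \<ge> 1; vs!0 = v_1).\<close>
definition beta_seq :: "'a set \<Rightarrow> ('a \<Rightarrow> 'a \<Rightarrow> bool) \<Rightarrow> 'a list \<Rightarrow> bool" where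
  "beta_seq V E vs \<longleftrightarrow> vs \<noteq> [] \<and> vs ! 0 \<in> V
     \<and> (\<forall>v\<in>V. deg V E v \<le> deg V E (vs ! 0))
     \<and> (\<forall>i. 1 \<le> i \<and> i < length vs \<longrightarrow>
           vs ! i \<in> common_nbhd V E (take i vs)
         \<and> (\<forall>u \<in> common_nbhd V E (take i vs). deg V E u \<le> deg V E (vs ! i)))"

end

theory Submission
  imports Defs
begin

text \<open>Let N_i be the common neighbourhood of v_1, ..., v_i, so N_0 = V. The layer
  N_i - N_(i+1) consists of vertices of N_i not adjacent to v_(i+1); by the choice of
  v_(i+1) each has degree at most d(v_(i+1)), and there are at most n - d(v_(i+1)) of them,
  so the layer contributes at most 1 to W(G). Since v_1, ..., v_r is a clique that does not
  extend to an (r+1)-clique, N_r is empty, so the r layers exhaust V and W(G) \<le> r.\<close>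

lemma simple_graph_deg_less_card:
  assumes "simple_graph V E" "v \<in> V"
  shows "deg V E v < card V"
proof -
  have "finite V" using assms(1) by (simp add: simple_graph_def)
  moreover have "nbhd V E v \<subseteq> V - {v}" using assms(1) by (auto simp: simple_graph_def nbhd_def)
  ultimately have "card (nbhd V E v) \<le> card (V - {v})" by (intro card_mono) auto
  also have "\<dots> < card V" using \<open>finite V\<close> assms(2) by (rule card_Diff1_less)
  finally show ?thesis unfolding deg_def .
qed

lemma sum_inverse_codeg_le_one:
  assumes "simple_graph V E" "v \<in> V"
    and "A \<subseteq> V - nbhd V E v" "\<And>u. u \<in> A \<Longrightarrow> deg V E u \<le> deg V E v"
  shows "(\<Sum>u\<in>A. 1 / (real (card V) - real (deg V E u))) \<le> 1"
proof -
  define c where "c = real (card V) - real (deg V E v)"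
  have "finite V" using assms(1) by (simp add: simple_graph_def)
  have c_pos: "c > 0" using simple_graph_deg_less_card[OF assms(1,2)] by (simp add: c_def)
  have "card A \<le> card (V - nbhd V E v)" using assms(3) \<open>finite V\<close> by (intro card_mono) auto
  also have "\<dots> = card V - deg V E v"
    unfolding deg_def using \<open>finite V\<close> by (intro card_Diff_subset) (auto simp: nbhd_def)
  finally have card_A: "real (card A) \<le> c"
    using simple_graph_deg_less_card[OF assms(1,2)] by (simp add: c_def)
  have "(\<Sum>u\<in>A. 1 / (real (card V) - real (deg V E u))) \<le> (\<Sum>u\<in>A. 1 / c)"
  proof (rule sum_mono)
    fix u assume "u \<in> A"
    then have "c \<le> real (card V) - real (deg V E u)" using assms(4) by (simp add: c_def)
    then show "1 / (real (card V) - real (deg V E u)) \<le> 1 / c"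
      using c_pos by (simp add: frac_le)
  qed
  also have "\<dots> = real (card A) / c" by simp
  also have "\<dots> \<le> 1" using card_A c_pos by simp
  finally show ?thesis .
qed

lemma common_nbhd_Nil: "common_nbhd V E [] = V"
  by (simp add: common_nbhd_def)

lemma common_nbhd_take_Suc:
  assumes "i < length vs"
  shows "common_nbhd V E (take (Suc i) vs) = {u \<in> common_nbhd V E (take i vs). E (vs ! i) u}"
  using assms by (auto simp: common_nbhd_def take_Suc_conv_app_nth)

lemma beta_seq_edge:
  assumes "beta_seq V E vs" "j < i" "i < length vs"
  shows "E (vs ! j) (vs ! i)"
proof -
  have "vs ! i \<in> common_nbhd V E (take i vs)" using assms by (simp add: beta_seq_def)
  moreover have "vs ! j \<in> set (take i vs)" using assms(2,3) by (auto simp: in_set_conv_nth)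
  ultimately show ?thesis by (simp add: common_nbhd_def)
qed

lemma beta_seq_nth_in_V:
  assumes "beta_seq V E vs" "i < length vs"
  shows "vs ! i \<in> V"
  using assms by (cases "i = 0") (auto simp: beta_seq_def common_nbhd_def)

lemma beta_seq_deg_le:
  assumes "beta_seq V E vs" "i < length vs" "u \<in> common_nbhd V E (take i vs)"
  shows "deg V E u \<le> deg V E (vs ! i)"
  using assms by (cases "i = 0") (auto simp: beta_seq_def common_nbhd_Nil)

lemma beta_seq_clique:
  assumes "simple_graph V E" "beta_seq V E vs"
  shows "clique V E (set vs)"
  unfolding clique_def
proof (intro conjI ballI impI)
  show "set vs \<subseteq> V" using beta_seq_nth_in_V[OF assms(2)] by (auto simp: in_set_conv_nth)
next
  fix a b assume "a \<in> set vs" "b \<in> set vs" "a \<noteq> b"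
  then obtain i j where ij: "i < length vs" "j < length vs" "vs ! i = a" "vs ! j = b" "i \<noteq> j"
    by (metis in_set_conv_nth)
  have "E (vs ! i) (vs ! j) \<or> E (vs ! j) (vs ! i)"
    using beta_seq_edge[OF assms(2)] ij by (metis linorder_neq_iff)
  then show "E a b" using assms(1) ij by (auto simp: simple_graph_def)
qed

lemma beta_seq_distinct:
  assumes "simple_graph V E" "beta_seq V E vs"
  shows "distinct vs"
  unfolding distinct_conv_nth
proof (intro allI impI)
  fix i j assume "i < length vs" "j < length vs" "i \<noteq> j"
  then have "E (vs ! i) (vs ! j) \<or> E (vs ! j) (vs ! i)"
    using beta_seq_edge[OF assms(2)] by (metis linorder_neq_iff)
  then show "vs ! i \<noteq> vs ! j" using assms(1) by (auto simp: simple_graph_def)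
qed

lemma clique_insert_common_nbhd:
  assumes "simple_graph V E" "clique V E (set vs)" "u \<in> common_nbhd V E vs"
  shows "clique V E (insert u (set vs))" "u \<notin> set vs"
  using assms by (auto simp: simple_graph_def clique_def common_nbhd_def)

lemma beta_seq_common_nbhd_empty:
  assumes "simple_graph V E" "beta_seq V E vs"
    and "\<not> (\<exists>K. clique V E K \<and> card K = length vs + 1 \<and> set vs \<subseteq> K)"
  shows "common_nbhd V E vs = {}"
proof (rule ccontr)
  assume "common_nbhd V E vs \<noteq> {}"
  then obtain u where u: "u \<in> common_nbhd V E vs" by blast
  note extend = clique_insert_common_nbhd[OF assms(1) beta_seq_clique[OF assms(1,2)] u]
  have "card (insert u (set vs)) = length vs + 1"
    using extend(2) beta_seq_distinct[OF assms(1,2)] by (simp add: distinct_card)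
  then show False using assms(3) extend(1) by blast
qed

lemma beta_seq_sum_outside_common_nbhd:
  assumes "simple_graph V E" "beta_seq V E vs" "k \<le> length vs"
  shows "(\<Sum>u\<in>V - common_nbhd V E (take k vs). 1 / (real (card V) - real (deg V E u)))
           \<le> real k"
  using assms(3)
proof (induction k)
  case 0
  then show ?case by (simp add: common_nbhd_Nil)
next
  case (Suc k)
  let ?f = "\<lambda>u. 1 / (real (card V) - real (deg V E u))"
  let ?N = "\<lambda>i. common_nbhd V E (take i vs)"
  have k: "k < length vs" using Suc.prems by simp
  have "finite V" using assms(1) by (simp add: simple_graph_def)
  have N_sub: "?N (Suc k) \<subseteq> ?N k" "?N k \<subseteq> V"
    using common_nbhd_take_Suc[OF k] by (auto simp: common_nbhd_def)
  have layer: "sum ?f (?N k - ?N (Suc k)) \<le> 1"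
  proof (rule sum_inverse_codeg_le_one[OF assms(1) beta_seq_nth_in_V[OF assms(2) k]])
    show "?N k - ?N (Suc k) \<subseteq> V - nbhd V E (vs ! k)"
      using common_nbhd_take_Suc[OF k] N_sub by (auto simp: nbhd_def)
  next
    show "deg V E u \<le> deg V E (vs ! k)" if "u \<in> ?N k - ?N (Suc k)" for u
      using beta_seq_deg_le[OF assms(2) k] that by blast
  qed
  have "V - ?N (Suc k) = (V - ?N k) \<union> (?N k - ?N (Suc k))" using N_sub by blast
  moreover have "(V - ?N k) \<inter> (?N k - ?N (Suc k)) = {}" by blast
  ultimately have "sum ?f (V - ?N (Suc k)) = sum ?f (V - ?N k) + sum ?f (?N k - ?N (Suc k))"
    using \<open>finite V\<close> N_sub(2) by (simp add: sum.union_disjoint finite_subset)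
  also have "\<dots> \<le> real k + 1" using Suc.IH k layer by simp
  finally show ?case by simp
qed

theorem mainTheorem5:
  fixes V :: "'a set" and E :: "'a \<Rightarrow> 'a \<Rightarrow> bool" and vs :: "'a list"
  assumes "simple_graph V E"
    and "beta_seq V E vs"
    and "\<not> (\<exists>K. clique V E K \<and> card K = length vs + 1 \<and> set vs \<subseteq> K)"
  shows "real (length vs) \<ge> W V E"
proof -
  have "W V E = (\<Sum>u\<in>V - common_nbhd V E (take (length vs) vs).
                   1 / (real (card V) - real (deg V E u)))"
    using beta_seq_common_nbhd_empty[OF assms] by (simp add: W_def)
  also have "\<dots> \<le> real (length vs)"
    using beta_seq_sum_outside_common_nbhd[OF assms(1,2) order_refl] .
  finally show ?thesis .
qed

end
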